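(* A functional $F\colon\Sigma^{**}\to\mathcal B$ is $\Sigma^{**}$-restricted polynomial-time computable if and only if it has a total polynomial-time computable extension $\tilde F\colon\mathcal B\to\mathcal B$; i.e. $\mathrm P(\Sigma^{**})=\mathrm P|_{\Sigma^{**}}$.
   Context: $\Sigma=\{0,1\}$, $\mathcal B=(\Sigma^* )^{\Sigma^*}$ is the set of total string functions; $\Sigma^{**}$ is the set of length-monotone $\varphi\in\mathcal B$, i.e. $|\mathbf a|\le|\mathbf b|\Rightarrow|\varphi(\mathbf a)|\le|\varphi(\mathbf b)|$. An oracle Turing machine $M^?$ with oracle $\varphi$ replaces, upon entering its query state, the query-tape content $\mathbf b$ by $\varphi(\mathbf b)$ in one time step; $\operatorname{time}_{M^\varphi}(\mathbf a)$ is its number of steps on input $\mathbf a$. $M^?$ computes $F\colon A\to\mathcal B$ if $M^\varphi=F(\varphi)$ for all $\varphi\in A$. The size function is $|\varphi|(n)=\max\{|\varphi(\mathbf a)|:|\mathbf a|\le n\}$. Second-order polynomials are the smallest class of functions $\mathbb N^{\mathbb N}\times\mathbb N\to\mathbb N$ containing all $(l,n)\mapsto p(n)$ for polynomials $p$ with natural coefficients and closed under pointwise sum, pointwise product, and $P\mapsto P^+$, $P^+(l,n)=l(P(l,n))$. For $A\subseteq\mathcal B$, $F\colon A\to\mathcal B$ is $A$-restricted polynomial-time computable if some machine computing $F$ satisfies $\operatorname{time}_{M^\varphi}(\mathbf a)\le P(|\varphi|,|\mathbf a|)$ for all $\varphi\in A$, $\mathbf a\in\Sigma^*$, for some second-order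 polynomial $P$. A total functional is polynomial-time computable if this holds with $A=\mathcal B$. *)

theory Defs
  imports "HOL-Computational_Algebra.Polynomial"
begin

type_synonym word = "bool list"            \<comment> \<open>\<Sigma>* with \<Sigma> = {0,1}; False = 0, True = 1\<close>
type_synonym strfun = "word \<Rightarrow> word"

definition length_monotone :: "strfun set" where
  "length_monotone = {\<phi>. \<forall>a b. length a \<le> length b \<longrightarrow> length (\<phi> a) \<le> length (\<phi> b)}"

definition size_fn :: "strfun \<Rightarrow> nat \<Rightarrow> nat" where
  "size_fn \<phi> n = Max ((\<lambda>a. length (\<phi> a)) ` {a. length a \<le> n})"

inductive sop :: "((nat \<Rightarrow> nat) \<Rightarrow> nat \<Rightarrow> nat) \<Rightarrow> bool" where
  sop_poly: "sop (\<lambda>l n. poly (p :: nat poly) n)"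
| sop_add: "sop P \<Longrightarrow> sop Q \<Longrightarrow> sop (\<lambda>l n. P l n + Q l n)"
| sop_mult: "sop P \<Longrightarrow> sop Q \<Longrightarrow> sop (\<lambda>l n. P l n * Q l n)"
| sop_app: "sop P \<Longrightarrow> sop (\<lambda>l n. l (P l n))"

text \<open>Tape 0 is the input tape, tape 1 the query tape,
  tape 2 the output tape, further tapes are work tapes. Tape symbols are natural numbers below
  the alphabet size; 0 is the blank, 1 encodes the letter 0 and 2 encodes the letter 1.
  States are natural numbers below the number of states; state 0 is the start state,
  state 1 the halting state, state 2 the query state, state 3 the answer state.
  Tapes are one-sided infinite (cells indexed by nat); a left move at cell 0 stays.\<close>

datatype move = Lm | Sm | Rm

record otm =
  tapes :: nat
  states :: nat
  symbols :: nat
  delta :: "nat \<Rightarrow> nat list \<Rightarrow> nat \<times> (nat \<times> move) list"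

definition wf_otm :: "otm \<Rightarrow> bool" where
  "wf_otm M \<longleftrightarrow> tapes M \<ge> 3 \<and> states M \<ge> 4 \<and> symbols M \<ge> 3 \<and>
    (\<forall>q rs. q < states M \<and> length rs = tapes M \<and> set rs \<subseteq> {..<symbols M} \<longrightarrow>
       fst (delta M q rs) < states M \<and> length (snd (delta M q rs)) = tapes M \<and>
       (\<forall>x \<in> set (snd (delta M q rs)). fst x < symbols M))"

type_synonym tape = "(nat \<Rightarrow> nat) \<times> nat"    \<comment> \<open>content and head position\<close>
type_synonym config = "nat \<times> tape list"

definition sym_of_bool :: "bool \<Rightarrow> nat" where
  "sym_of_bool b = (if b then 2 else 1)"

definition enc :: "word \<Rightarrow> nat \<Rightarrow> nat" where
  "enc w = (\<lambda>i. if i < length w then sym_of_bool (w ! i) else 0)"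

definition dec :: "(nat \<Rightarrow> nat) \<Rightarrow> word" where
  "dec c = map (\<lambda>i. c i = 2) [0..< (LEAST i. c i \<notin> {1, 2})]"

fun mv :: "move \<Rightarrow> nat \<Rightarrow> nat" where
  "mv Lm h = h - 1"
| "mv Sm h = h"
| "mv Rm h = h + 1"

definition step :: "otm \<Rightarrow> strfun \<Rightarrow> config \<Rightarrow> config" where
  "step M \<phi> cf = (let (q, ts) = cf in
     if q = 1 then (q, ts)
     else if q = 2 then (3, ts[1 := (enc (\<phi> (dec (fst (ts ! 1)))), 0)])
     else (let (q', acts) = delta M q (map (\<lambda>t. fst t (snd t)) ts) in
       (q', map (\<lambda>(t, a). ((fst t)(snd t := fst a), mv (snd a) (snd t))) (zip ts acts))))"

definition init_config :: "otm \<Rightarrow> word \<Rightarrow> config" where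
  "init_config M a = (0, (enc a, 0) # replicate (tapes M - 1) (\<lambda>_. 0, 0))"

definition run :: "otm \<Rightarrow> strfun \<Rightarrow> word \<Rightarrow> nat \<Rightarrow> config" where
  "run M \<phi> a n = (step M \<phi> ^^ n) (init_config M a)"

definition halts :: "otm \<Rightarrow> strfun \<Rightarrow> word \<Rightarrow> bool" where
  "halts M \<phi> a \<longleftrightarrow> (\<exists>n. fst (run M \<phi> a n) = 1)"

definition otm_time :: "otm \<Rightarrow> strfun \<Rightarrow> word \<Rightarrow> nat" where
  "otm_time M \<phi> a = (LEAST n. fst (run M \<phi> a n) = 1)"

definition otm_output :: "otm \<Rightarrow> strfun \<Rightarrow> word \<Rightarrow> word" where
  "otm_output M \<phi> a = dec (fst (snd (run M \<phi> a (otm_time M \<phi> a)) ! 2))"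

definition computes_on :: "strfun set \<Rightarrow> otm \<Rightarrow> (strfun \<Rightarrow> strfun) \<Rightarrow> bool" where
  "computes_on A M F \<longleftrightarrow> (\<forall>\<phi>\<in>A. \<forall>a. halts M \<phi> a \<and> otm_output M \<phi> a = F \<phi> a)"

definition restricted_polytime :: "strfun set \<Rightarrow> (strfun \<Rightarrow> strfun) \<Rightarrow> bool" where
  "restricted_polytime A F \<longleftrightarrow> (\<exists>M P. wf_otm M \<and> sop P \<and> computes_on A M F \<and>
      (\<forall>\<phi>\<in>A. \<forall>a. otm_time M \<phi> a \<le> P (size_fn \<phi>) (length a)))"

definition polytime :: "(strfun \<Rightarrow> strfun) \<Rightarrow> bool" where
  "polytime F \<longleftrightarrow> restricted_polytime UNIV F"

end

theory Submission
  imports Defs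
begin

text \<open>Restricting a total polynomial-time functional trivially gives a restricted one. Conversely,
  for length-monotone \<open>\<phi>\<close> the size function is \<open>|\<phi>|(n) = |\<phi>(0\<^sup>n)|\<close>, so it can be evaluated with a
  single oracle query. Every second-order polynomial is dominated, for monotone \<open>l\<close>, by the
  \<open>d\<close>-fold iterate of \<open>v \<mapsto> (v + l v + 2)\<^sup>2\<close>. A machine can therefore first compute this bound
  from \<open>|a|\<close>, using \<open>|\<phi>(0\<^sup>v)|\<close> in place of \<open>l v\<close>, and then run the given machine with the bound
  as a clock. On length-monotone oracles the clock never runs out, so the outputs agree; on an
  arbitrary oracle \<open>|\<phi>(0\<^sup>v)| \<le> |\<phi>|(v)\<close>, so the clocked machine runs in time polynomial in
  \<open>|\<phi>|\<close> and \<open>|a|\<close>.\<close>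

definition head_symbol :: "tape \<Rightarrow> nat" where
  "head_symbol t = fst t (snd t)"

definition apply_action :: "tape \<Rightarrow> nat \<times> move \<Rightarrow> tape" where
  "apply_action t a = ((fst t)(snd t := fst a), mv (snd a) (snd t))"

lemma head_symbol_pair [simp]: "head_symbol (c, h) = c h"
  by (simp add: head_symbol_def)

lemma apply_action_pair [simp]: "apply_action (c, h) (w, m) = (c(h := w), mv m h)"
  by (simp add: apply_action_def)

lemma apply_action_keep [simp]: "apply_action t (head_symbol t, Sm) = t"
  by (simp add: apply_action_def head_symbol_def)

lemma step_delta:
  "q \<noteq> 1 \<Longrightarrow> q \<noteq> 2 \<Longrightarrow> step M \<phi> (q, ts) =
     (fst (delta M q (map head_symbol ts)),
      map (\<lambda>(t, a). apply_action t a) (zip ts (snd (delta M q (map head_symbol ts)))))"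
  by (simp add: step_def head_symbol_def[abs_def] apply_action_def split: prod.split)

lemma step_halted: "step M \<phi> (1, ts) = (1, ts)"
  by (simp add: step_def)

lemma run_halted_stable: "fst (run M \<phi> a n) = 1 \<Longrightarrow> run M \<phi> a (m + n) = run M \<phi> a n"
proof (induction m)
  case (Suc m)
  have "run M \<phi> a (Suc m + n) = step M \<phi> (run M \<phi> a (m + n))"
    by (simp add: run_def)
  also have "\<dots> = step M \<phi> (run M \<phi> a n)"
    using Suc by simp
  also have "\<dots> = run M \<phi> a n"
    using Suc.prems step_halted[of M \<phi> "snd (run M \<phi> a n)"] by (metis prod.collapse)
  finally show ?case .
qed simp

lemma halts_otm_time_le: "fst (run M \<phi> a t) = 1 \<Longrightarrow> halts M \<phi> a \<and> otm_time M \<phi> a \<le> t"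
  unfolding halts_def otm_time_def by (auto intro: Least_le)

lemma otm_output_run_halted:
  assumes "fst (run M \<phi> a T) = 1"
  shows "otm_output M \<phi> a = dec (fst (snd (run M \<phi> a T) ! 2))"
proof -
  have "fst (run M \<phi> a (otm_time M \<phi> a)) = 1"
    using assms unfolding otm_time_def by (rule LeastI)
  moreover have "otm_time M \<phi> a \<le> T"
    using halts_otm_time_le[OF assms] ..
  ultimately have "run M \<phi> a T = run M \<phi> a (otm_time M \<phi> a)"
    using run_halted_stable[of M \<phi> a "otm_time M \<phi> a" "T - otm_time M \<phi> a"] by simp
  then show ?thesis
    unfolding otm_output_def by simp
qed

lemma otm_time_not_halted: "t < otm_time M \<phi> a \<Longrightarrow> fst (run M \<phi> a t) \<noteq> 1"
  unfolding otm_time_def by (rule not_less_Least)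

lemma run_add: "run M \<phi> a (t + p) = (step M \<phi> ^^ t) ((step M \<phi> ^^ p) (init_config M a))"
  by (simp add: run_def funpow_add)

lemma funpow_Suc_apply: "(f ^^ Suc m) x = (f ^^ m) (f x)"
  by (simp add: funpow_swap1)

lemma funpow_2_apply: "(f ^^ 2) x = f (f x)"
  by (simp add: numeral_2_eq_2)

lemma funpow_trans: "(f ^^ t1) a = b \<Longrightarrow> (f ^^ t2) b = c \<Longrightarrow> (f ^^ (t1 + t2)) a = c"
  by (metis funpow_add comp_apply add.commute)

definition valid_config :: "otm \<Rightarrow> config \<Rightarrow> bool" where
  "valid_config M cf \<longleftrightarrow> fst cf < states M \<and> length (snd cf) = tapes M \<and>
     (\<forall>t\<in>set (snd cf). \<forall>j. fst t j < symbols M)"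

lemma enc_less_3: "enc w j < 3"
  by (simp add: enc_def sym_of_bool_def)

lemma enc_nonblank: "i < length w \<Longrightarrow> enc w i \<noteq> 0"
  by (simp add: enc_def sym_of_bool_def)

lemma enc_blank: "\<not> i < length w \<Longrightarrow> enc w i = 0"
  by (simp add: enc_def)

lemma enc_Nil: "enc [] = (\<lambda>_. 0)"
  by (simp add: enc_def fun_eq_iff)

lemma valid_init_config: "wf_otm M \<Longrightarrow> valid_config M (init_config M a)"
  unfolding valid_config_def wf_otm_def init_config_def
  using enc_less_3 by (auto dest: less_le_trans)

lemma valid_step:
  assumes wf: "wf_otm M" and valid: "valid_config M (q, ts)"
  shows "valid_config M (step M \<phi> (q, ts))"
proof -
  have bounds: "symbols M \<ge> 3" "states M \<ge> 4"
    using wf by (auto simp: wf_otm_def)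
  consider "q = 1" | "q = 2" | "q \<noteq> 1 \<and> q \<noteq> 2" by blast
  then show ?thesis
  proof cases
    case 1
    then show ?thesis using valid by (simp add: step_def)
  next
    case 2
    let ?ts' = "ts[1 := (enc (\<phi> (dec (fst (ts ! 1)))), 0)]"
    have "\<forall>j. fst t j < symbols M" if "t \<in> set ?ts'" for t
    proof -
      have "t \<in> set ts \<or> t = (enc (\<phi> (dec (fst (ts ! 1)))), 0)"
        using that set_update_subset_insert by fastforce
      moreover have "\<forall>w j. enc w j < symbols M"
        using enc_less_3 bounds by (metis less_le_trans)
      ultimately show ?thesis using valid unfolding valid_config_def by auto
    qed
    then show ?thesis using 2 valid bounds by (simp add: step_def valid_config_def)
  next
    case 3
    let ?rs = "map head_symbol ts"
    have "length ?rs = tapes M" "set ?rs \<subseteq> {..<symbols M}" "q < states M"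
      using valid by (auto simp: valid_config_def head_symbol_def)
    then have "fst (delta M q ?rs) < states M \<and> length (snd (delta M q ?rs)) = tapes M \<and>
        (\<forall>x\<in>set (snd (delta M q ?rs)). fst x < symbols M)"
      using wf unfolding wf_otm_def by blast
    moreover obtain q' acts where da: "delta M q ?rs = (q', acts)" by fastforce
    ultimately have acts: "q' < states M" "length acts = tapes M" "\<forall>x\<in>set acts. fst x < symbols M"
      by simp_all
    have "step M \<phi> (q, ts) = (q', map (\<lambda>(t, a). apply_action t a) (zip ts acts))"
      using 3 da by (simp add: step_delta)
    moreover have "\<forall>t\<in>set (map (\<lambda>(t, a). apply_action t a) (zip ts acts)). \<forall>j. fst t j < symbols M"
      using valid acts by (fastforce simp: valid_config_def dest: set_zip_leftD set_zip_rightD)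
    ultimately show ?thesis using acts valid by (simp add: valid_config_def)
  qed
qed

lemma valid_run: "wf_otm M \<Longrightarrow> valid_config M (run M \<phi> a t)"
proof (induction t)
  case 0
  then show ?case by (simp add: run_def valid_init_config)
next
  case (Suc t)
  then show ?case
    using valid_step[OF Suc.prems, of "fst (run M \<phi> a t)" "snd (run M \<phi> a t)" \<phi>]
    by (simp add: run_def)
qed

section \<open>Second-order polynomials are dominated by iterated squaring\<close>

definition clock_square :: "(nat \<Rightarrow> nat) \<Rightarrow> nat \<Rightarrow> nat" where
  "clock_square l v = (v + l v + 2) * (v + l v + 2)"

definition clock_bound :: "nat \<Rightarrow> (nat \<Rightarrow> nat) \<Rightarrow> nat \<Rightarrow> nat" where
  "clock_bound d l n = (clock_square l ^^ d) n"

lemma clock_square_ge: "v \<le> clock_square l v" "l v \<le> clock_square l v"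
  "2 * v \<le> clock_square l v" "v * v \<le> clock_square l v"
proof -
  define z where "z = v + l v + 2"
  have "v + 2 \<le> z" "l v \<le> z" "2 \<le> z"
    by (simp_all add: z_def)
  moreover have "z \<le> z * z" "2 * v \<le> z * z" "v * v \<le> z * z"
    using \<open>v + 2 \<le> z\<close> \<open>2 \<le> z\<close> by (simp_all add: mult_le_mono mult_le_mono1)
  ultimately show "v \<le> clock_square l v" "l v \<le> clock_square l v"
    "2 * v \<le> clock_square l v" "v * v \<le> clock_square l v"
    unfolding clock_square_def z_def[symmetric] by linarith+
qed

lemma clock_square_mono:
  assumes "v \<le> v'" and "\<And>x. l x \<le> l' x" and "mono l'"
  shows "clock_square l v \<le> clock_square l' v'"
proof -
  have "l v \<le> l' v'"
    using assms by (meson le_trans monoD)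
  then have "v + l v + 2 \<le> v' + l' v' + 2"
    using assms(1) by linarith
  then show ?thesis
    unfolding clock_square_def by (intro mult_le_mono)
qed

lemma clock_bound_0 [simp]: "clock_bound 0 l n = n"
  by (simp add: clock_bound_def)

lemma clock_bound_Suc: "clock_bound (Suc d) l n = clock_square l (clock_bound d l n)"
  by (simp add: clock_bound_def)

lemma clock_bound_Suc_right: "clock_bound (Suc d) l n = clock_bound d l (clock_square l n)"
  by (simp add: clock_bound_def funpow_swap1)

lemma clock_bound_ge: "n \<le> clock_bound d l n"
  by (induction d) (auto simp: clock_bound_Suc intro: order_trans clock_square_ge(1))

lemma clock_bound_mono_rounds: "d \<le> e \<Longrightarrow> clock_bound d l n \<le> clock_bound e l n"
proof (induction e)
  case (Suc e)
  then show ?case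
    using clock_square_ge(1)[where v="clock_bound e l n" and l=l]
    by (cases "d = Suc e") (auto simp: clock_bound_Suc)
qed simp

lemma clock_bound_mono_size: "(\<And>x. l x \<le> l' x) \<Longrightarrow> mono l' \<Longrightarrow> clock_bound d l n \<le> clock_bound d l' n"
  by (induction d) (auto simp: clock_bound_Suc intro: clock_square_mono)

lemma clock_bound_ge_power: "(n + 2) ^ (2 ^ Suc d) \<le> clock_bound (Suc d) l n"
proof (induction d)
  case 0
  have "(n + 2) * (n + 2) \<le> clock_square l n"
    unfolding clock_square_def by (intro mult_le_mono) simp_all
  then show ?case by (simp add: clock_bound_Suc power2_eq_square)
next
  case (Suc d)
  have "(n + 2) ^ (2 ^ Suc (Suc d)) = (n + 2) ^ (2 ^ Suc d) * (n + 2) ^ (2 ^ Suc d)"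
    by (simp flip: power_add)
  also have "\<dots> \<le> clock_bound (Suc d) l n * clock_bound (Suc d) l n"
    using Suc by (intro mult_le_mono)
  also have "\<dots> \<le> clock_bound (Suc (Suc d)) l n"
    unfolding clock_bound_Suc[of "Suc d"] by (rule clock_square_ge(4))
  finally show ?case .
qed

lemma add_le_power: "n + a + 2 \<le> (n + 2) ^ (a + 1)"
proof (induction a)
  case (Suc a)
  have "n + Suc a + 2 \<le> 2 * (n + a + 2)" by simp
  also have "\<dots> \<le> (n + 2) * (n + a + 2)" by (intro mult_le_mono1) simp
  also have "\<dots> \<le> (n + 2) * (n + 2) ^ (a + 1)" using Suc by (intro mult_le_mono2)
  finally show ?case by simp
qed simp

lemma poly_nat_le_power: "\<exists>N. \<forall>n. poly p (n::nat) \<le> (n + 2) ^ N"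
proof (induction p rule: pCons_induct)
  case (pCons a p)
  then obtain N where N: "\<And>n. poly p n \<le> (n + 2) ^ N" by blast
  have "poly (pCons a p) n \<le> (n + 2) ^ (N + (a + 1))" for n
  proof -
    have "poly (pCons a p) n \<le> a + n * (n + 2) ^ N"
      using N[of n] by simp
    also have "\<dots> \<le> (n + a + 1) * (n + 2) ^ N"
    proof -
      have "a \<le> a * (n + 2) ^ N" by simp
      moreover have "(n + a + 1) * (n + 2) ^ N = n * (n + 2) ^ N + a * (n + 2) ^ N + (n + 2) ^ N"
        by (simp add: algebra_simps)
      ultimately show ?thesis by linarith
    qed
    also have "\<dots> \<le> (n + 2) ^ (a + 1) * (n + 2) ^ N"
      using add_le_power[of n a] by (intro mult_le_mono1) simp
    finally show ?thesis by (metis power_add mult.commute)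
  qed
  then show ?case by blast
qed simp

lemma sop_le_clock_bound: "sop P \<Longrightarrow> \<exists>d. \<forall>l n. mono l \<longrightarrow> P l n \<le> clock_bound d l n"
proof (induction rule: sop.induct)
  case (sop_poly p)
  obtain N where N: "\<And>n. poly p n \<le> (n + 2) ^ N"
    using poly_nat_le_power[of p] by blast
  have "N \<le> 2 ^ Suc N"
    using less_exp[of N] by (simp only: power_Suc)
  then have "poly p n \<le> clock_bound (Suc N) l n" for l n
    using N[of n] clock_bound_ge_power[of n N l] power_increasing[of N "2 ^ Suc N" "n + 2"]
    by linarith
  then show ?case by blast
next
  case (sop_add P Q)
  then obtain d1 d2 where d1: "\<And>l n. mono l \<Longrightarrow> P l n \<le> clock_bound d1 l n"
    and d2: "\<And>l n. mono l \<Longrightarrow> Q l n \<le> clock_bound d2 l n" by blast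
  define e where "e = max d1 d2"
  have "P l n + Q l n \<le> clock_bound (Suc e) l n" if "mono l" for l n
  proof -
    have "P l n \<le> clock_bound e l n" "Q l n \<le> clock_bound e l n"
      using d1[OF that, of n] d2[OF that, of n] clock_bound_mono_rounds[of d1 e l n]
        clock_bound_mono_rounds[of d2 e l n] by (simp_all add: e_def)
    then show ?thesis
      using clock_square_ge(3)[where v="clock_bound e l n" and l=l] by (simp add: clock_bound_Suc)
  qed
  then show ?case by blast
next
  case (sop_mult P Q)
  then obtain d1 d2 where d1: "\<And>l n. mono l \<Longrightarrow> P l n \<le> clock_bound d1 l n"
    and d2: "\<And>l n. mono l \<Longrightarrow> Q l n \<le> clock_bound d2 l n" by blast
  define e where "e = max d1 d2"
  have "P l n * Q l n \<le> clock_bound (Suc e) l n" if "mono l" for l n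
  proof -
    have "P l n \<le> clock_bound e l n" "Q l n \<le> clock_bound e l n"
      using d1[OF that, of n] d2[OF that, of n] clock_bound_mono_rounds[of d1 e l n]
        clock_bound_mono_rounds[of d2 e l n] by (simp_all add: e_def)
    then have "P l n * Q l n \<le> clock_bound e l n * clock_bound e l n"
      by (rule mult_le_mono)
    then show ?thesis
      using clock_square_ge(4)[where v="clock_bound e l n" and l=l] by (simp add: clock_bound_Suc)
  qed
  then show ?case by blast
next
  case (sop_app P)
  then obtain d where d: "\<And>l n. mono l \<Longrightarrow> P l n \<le> clock_bound d l n" by blast
  have "l (P l n) \<le> clock_bound (Suc d) l n" if "mono l" for l n
  proof -
    have "l (P l n) \<le> l (clock_bound d l n)"
      using d[OF that, of n] that by (simp add: monoD)
    then show ?thesis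
      using clock_square_ge(2)[where v="clock_bound d l n" and l=l] by (simp add: clock_bound_Suc)
  qed
  then show ?case by blast
qed

lemma sop_const: "sop (\<lambda>l n. c)"
  using sop_poly[of "[:c:]"] by simp

lemma sop_id: "sop (\<lambda>l n. n)"
  using sop_poly[of "[:0, 1:]"] by simp

lemma sop_clock_bound: "sop (clock_bound d)"
proof (induction d)
  case 0
  then show ?case
    using sop_id by (simp add: clock_bound_def[abs_def])
next
  case (Suc d)
  have A: "sop (\<lambda>l n. clock_bound d l n + l (clock_bound d l n) + 2)"
    using sop_add[OF sop_add[OF Suc sop_app[OF Suc]] sop_const[of 2]] by simp
  have "clock_bound (Suc d) = (\<lambda>l n. (clock_bound d l n + l (clock_bound d l n) + 2) *
      (clock_bound d l n + l (clock_bound d l n) + 2))"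
    by (simp add: fun_eq_iff clock_bound_Suc clock_square_def)
  then show ?case
    using sop_mult[OF A A] by simp
qed

section \<open>The size function of length-monotone oracles\<close>

definition zero_query_size :: "strfun \<Rightarrow> nat \<Rightarrow> nat" where
  "zero_query_size \<phi> m = length (\<phi> (replicate m False))"

lemma finite_words_le: "finite {a :: word. length a \<le> m}"
  using finite_lists_length_le[of "UNIV :: bool set" m] by simp

lemma zero_query_size_le_size_fn: "zero_query_size \<phi> m \<le> size_fn \<phi> m"
  unfolding zero_query_size_def size_fn_def by (rule Max_ge) (use finite_words_le in auto)

lemma mono_size_fn: "mono (size_fn \<phi>)"
proof
  fix m m' :: nat
  assume "m \<le> m'"
  then have "{a :: word. length a \<le> m} \<subseteq> {a. length a \<le> m'}" by auto
  moreover have "{a :: word. length a \<le> m} \<noteq> {}"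
    by (metis empty_iff list.size(3) mem_Collect_eq zero_le)
  ultimately show "size_fn \<phi> m \<le> size_fn \<phi> m'"
    unfolding size_fn_def by (intro Max_mono) (use finite_words_le in auto)
qed

lemma size_fn_eq_zero_query_size:
  assumes "\<phi> \<in> length_monotone"
  shows "size_fn \<phi> = zero_query_size \<phi>"
proof
  fix m
  have "size_fn \<phi> m \<le> zero_query_size \<phi> m"
    unfolding size_fn_def zero_query_size_def
  proof (rule Max.boundedI)
    show "finite ((\<lambda>a. length (\<phi> a)) ` {a. length a \<le> m})"
      using finite_words_le by simp
    show "(\<lambda>a. length (\<phi> a)) ` {a. length a \<le> m} \<noteq> {}"
      by (metis empty_iff image_is_empty list.size(3) mem_Collect_eq zero_le)
  qed (use assms in \<open>auto simp: length_monotone_def\<close>)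
  then show "size_fn \<phi> m = zero_query_size \<phi> m"
    using zero_query_size_le_size_fn by (rule antisym)
qed

section \<open>The clocked machine\<close>

text \<open>The clocked version of \<open>M\<close> has the tapes of \<open>M\<close> followed by six unary counters
  \<open>x, a, b, c, r, dd\<close>: cell 0 carries the mark 1 and the value is the head position. In the
  preparation phase (states 0 and 4 to \<open>20 + d\<close>, and the query states 2 and 3 while cell 0 of
  \<open>dd\<close> is not 2) it loads \<open>d\<close> rounds into \<open>dd\<close> and sets \<open>x := |a|\<close>; each round queries
  \<open>0\<^sup>x\<close> and replaces \<open>x\<close> by \<open>(x + |answer| + 2)\<^sup>2\<close>, computed by repeated addition. It then
  writes 2 into cell 0 of \<open>dd\<close> and simulates \<open>M\<close>, state \<open>q\<close> of \<open>M\<close> becoming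
  \<open>sim_state d q\<close>; each simulated non-query step decrements \<open>x\<close>, and the machine halts when
  \<open>x = 0\<close>. The flag in \<open>dd\<close> tells the answer state 3 of the simulation from that of the
  machine's own queries.\<close>

definition blank_tape :: tape where
  "blank_tape = (\<lambda>_. 0, 0)"

definition counter_marks :: "nat \<Rightarrow> nat" where
  "counter_marks = (\<lambda>j. if j = 0 then 1 else 0)"

definition counter :: "nat \<Rightarrow> tape" where
  "counter v = (counter_marks, v)"

definition sim_flag :: tape where
  "sim_flag = (counter_marks(0 := 2), 0)"

definition clock_tapes :: "nat \<Rightarrow> tape list" where
  "clock_tapes v = [counter v, counter 0, counter 0, counter 0, counter 0, sim_flag]"

definition keep_all :: "nat \<Rightarrow> nat \<Rightarrow> nat \<Rightarrow> nat \<Rightarrow> nat \<Rightarrow> nat \<Rightarrow> nat \<Rightarrow> nat \<Rightarrow> (nat \<times> move) list" where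
  "keep_all s0 s1 sx sa sb sc sr sd = [(s0,Sm),(s1,Sm),(sx,Sm),(sa,Sm),(sb,Sm),(sc,Sm),(sr,Sm),(sd,Sm)]"

definition clock_delta :: "nat \<Rightarrow> nat \<Rightarrow> nat \<Rightarrow> nat \<Rightarrow> nat \<Rightarrow> nat \<Rightarrow> nat \<Rightarrow> nat \<Rightarrow> nat \<Rightarrow> nat \<Rightarrow> nat \<times> (nat \<times> move) list" where
"clock_delta d q s0 s1 sx sa sb sc sr sd = (
  if q = 0 then (20, [(s0,Sm),(s1,Sm),(1,Sm),(1,Sm),(1,Sm),(1,Sm),(1,Sm),(1,Sm)])
  else if 20 \<le> q \<and> q < 20 + d then (Suc q, [(s0,Sm),(s1,Sm),(sx,Sm),(sa,Sm),(sb,Sm),(sc,Sm),(sr,Sm),(sd,Rm)])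
  else if q = 20 + d then (4, keep_all s0 s1 sx sa sb sc sr sd)
  else if q = 4 then (if s0 = 0 then (5, keep_all s0 s1 sx sa sb sc sr sd)
       else (4, [(s0,Rm),(s1,Sm),(sx,Rm),(sa,Sm),(sb,Sm),(sc,Sm),(sr,Rm),(sd,Sm)]))
  else if q = 5 then (if sr = 1 then (6, keep_all s0 s1 sx sa sb sc sr sd)
       else (5, [(s0,Lm),(s1,Sm),(sx,Sm),(sa,Sm),(sb,Sm),(sc,Sm),(sr,Lm),(sd,Sm)]))
  else if q = 6 then (if sd = 1 then (18, keep_all s0 s1 sx sa sb sc sr sd)
       else (7, [(s0,Sm),(s1,Sm),(sx,Sm),(sa,Sm),(sb,Sm),(sc,Sm),(sr,Sm),(sd,Lm)]))
  else if q = 7 then (if sx = 1 then (2, [(s0,Sm),(0,Sm),(sx,Sm),(sa,Sm),(sb,Sm),(sc,Sm),(sr,Sm),(sd,Sm)])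
       else (7, [(s0,Sm),(1,Rm),(sx,Lm),(sa,Rm),(sb,Sm),(sc,Sm),(sr,Sm),(sd,Sm)]))
  else if q = 8 then (if sa = 1 then (9, keep_all s0 s1 sx sa sb sc sr sd)
       else (8, [(s0,Sm),(s1,Sm),(sx,Rm),(sa,Lm),(sb,Sm),(sc,Sm),(sr,Sm),(sd,Sm)]))
  else if q = 9 then (if s1 = 0 then (10, keep_all s0 s1 sx sa sb sc sr sd)
       else (9, [(s0,Sm),(s1,Rm),(sx,Rm),(sa,Sm),(sb,Sm),(sc,Sm),(sr,Rm),(sd,Sm)]))
  else if q = 10 then (if sr = 1 then (11, keep_all s0 s1 sx sa sb sc sr sd)
       else (10, [(s0,Sm),(s1,Lm),(sx,Sm),(sa,Sm),(sb,Sm),(sc,Sm),(sr,Lm),(sd,Sm)]))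
  else if q = 11 then (12, [(s0,Sm),(s1,Sm),(sx,Rm),(sa,Sm),(sb,Sm),(sc,Sm),(sr,Sm),(sd,Sm)])
  else if q = 12 then (13, [(s0,Sm),(s1,Sm),(sx,Rm),(sa,Sm),(sb,Sm),(sc,Sm),(sr,Sm),(sd,Sm)])
  else if q = 13 then (if sx = 1 then (14, keep_all s0 s1 sx sa sb sc sr sd)
       else (13, [(s0,Sm),(s1,Sm),(sx,Lm),(sa,Rm),(sb,Rm),(sc,Sm),(sr,Sm),(sd,Sm)]))
  else if q = 14 then (if sa = 1 then (17, keep_all s0 s1 sx sa sb sc sr sd)
       else (15, [(s0,Sm),(s1,Sm),(sx,Sm),(sa,Lm),(sb,Sm),(sc,Sm),(sr,Sm),(sd,Sm)]))
  else if q = 15 then (if sb = 1 then (16, keep_all s0 s1 sx sa sb sc sr sd)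
       else (15, [(s0,Sm),(s1,Sm),(sx,Rm),(sa,Sm),(sb,Lm),(sc,Rm),(sr,Sm),(sd,Sm)]))
  else if q = 16 then (if sc = 1 then (14, keep_all s0 s1 sx sa sb sc sr sd)
       else (16, [(s0,Sm),(s1,Sm),(sx,Sm),(sa,Sm),(sb,Rm),(sc,Lm),(sr,Sm),(sd,Sm)]))
  else if q = 17 then (if sb = 1 then (6, keep_all s0 s1 sx sa sb sc sr sd)
       else (17, [(s0,Sm),(s1,Sm),(sx,Sm),(sa,Sm),(sb,Lm),(sc,Sm),(sr,Sm),(sd,Sm)]))
  else if q = 18 then (if s1 = 0 then (19, keep_all s0 s1 sx sa sb sc sr sd)
       else (18, [(s0,Sm),(0,Rm),(sx,Sm),(sa,Sm),(sb,Sm),(sc,Sm),(sr,Rm),(sd,Sm)]))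
  else if q = 19 then (if sr = 1 then (21 + d, [(s0,Sm),(s1,Sm),(sx,Sm),(sa,Sm),(sb,Sm),(sc,Sm),(sr,Sm),(2,Sm)])
       else (19, [(s0,Sm),(s1,Lm),(sx,Sm),(sa,Sm),(sb,Sm),(sc,Sm),(sr,Lm),(sd,Sm)]))
  else (q, keep_all s0 s1 sx sa sb sc sr sd))"

definition sim_state :: "nat \<Rightarrow> nat \<Rightarrow> nat" where
  "sim_state d q = (if q = 1 \<or> q = 2 \<or> q = 3 then q else 21 + d + q)"

definition clock_phase :: "nat \<Rightarrow> nat \<Rightarrow> nat \<Rightarrow> bool" where
  "clock_phase d q flag \<longleftrightarrow> (q = 3 \<and> flag \<noteq> 2) \<or> (q \<noteq> 3 \<and> q < 21 + d)"

definition clocked_delta :: "otm \<Rightarrow> nat \<Rightarrow> nat \<Rightarrow> nat list \<Rightarrow> nat \<times> (nat \<times> move) list" where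
"clocked_delta M d q rs = (let k = tapes M in
  if q = 1 \<or> q = 2 then (q, map (\<lambda>s. (s, Sm)) rs)
  else if clock_phase d q (rs ! (k+5)) then
    (let pr = clock_delta d (if q = 3 then 8 else q)
                (rs!0) (rs!1) (rs!k) (rs!(k+1)) (rs!(k+2)) (rs!(k+3)) (rs!(k+4)) (rs!(k+5))
     in (fst pr, [snd pr ! 0, snd pr ! 1] @ map (\<lambda>i. (rs!i, Sm)) [2..<k] @ drop 2 (snd pr)))
  else
    (let qm = (if q = 3 then 3 else q - (21+d)) in
     if rs ! k = 1 then (1, map (\<lambda>s. (s, Sm)) rs)
     else (let pr = delta M qm (take k rs) in
        (sim_state d (fst pr), snd pr @ [(rs!k, Lm)] @ map (\<lambda>s. (s, Sm)) (drop (k+1) rs)))))"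

definition clocked_otm :: "otm \<Rightarrow> nat \<Rightarrow> otm" where
  "clocked_otm M d = \<lparr>tapes = tapes M + 6, states = 21 + d + states M, symbols = symbols M,
     delta = clocked_delta M d\<rparr>"

definition clocked_config :: "nat \<Rightarrow> nat \<Rightarrow> tape \<Rightarrow> tape \<Rightarrow> tape \<Rightarrow> tape \<Rightarrow> tape \<Rightarrow> tape \<Rightarrow> tape \<Rightarrow> tape \<Rightarrow> config" where
  "clocked_config k q inp qt x a b c r dd =
     (q, [inp, qt] @ replicate (k - 2) blank_tape @ [x, a, b, c, r, dd])"

lemma head_symbol_counter [simp]: "head_symbol (counter v) = counter_marks v"
  by (simp add: head_symbol_def counter_def)

lemma counter_marks_neq_2 [simp]: "counter_marks j \<noteq> 2"
  by (simp add: counter_marks_def)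

lemma counter_marks_0 [simp]: "counter_marks 0 = 1"
  and counter_marks_Suc [simp]: "counter_marks (Suc m) = 0"
  by (simp_all add: counter_marks_def)

lemma apply_action_counter [simp]: "w = counter_marks v \<Longrightarrow> apply_action (counter v) (w, m) = counter (mv m v)"
  by (simp add: apply_action_def counter_def)

lemma apply_action_blank: "apply_action blank_tape (0, Sm) = blank_tape"
  by (simp add: apply_action_def blank_tape_def fun_eq_iff)

lemma sim_state_1 [simp]: "sim_state d 1 = 1"
  and sim_state_2 [simp]: "sim_state d 2 = 2"
  and sim_state_3 [simp]: "sim_state d 3 = 3"
  by (simp_all add: sim_state_def)

lemma nth_clock_tape: "k \<ge> 2 \<Longrightarrow> ([u, v] @ replicate (k - 2) z @ S) ! (k + i) = S ! i"
proof -
  assume "k \<ge> 2"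
  then obtain m where m: "k = Suc (Suc m)" by (metis add_2_eq_Suc le_Suc_ex)
  show ?thesis unfolding m using nth_append_length_plus[of "replicate m z" S i] by simp
qed

lemma clocked_delta_clock:
  assumes "q \<noteq> 1" "q \<noteq> 2" "clock_phase d q (rs ! (tapes M + 5))"
  shows "clocked_delta M d q rs =
    (let pr = clock_delta d (if q = 3 then 8 else q) (rs!0) (rs!1) (rs!tapes M) (rs!(tapes M+1))
         (rs!(tapes M+2)) (rs!(tapes M+3)) (rs!(tapes M+4)) (rs!(tapes M+5))
     in (fst pr, [snd pr ! 0, snd pr ! 1] @ map (\<lambda>i. (rs!i, Sm)) [2..<tapes M] @ drop 2 (snd pr)))"
  using assms unfolding clocked_delta_def Let_def by auto

lemma clocked_delta_sim:
  assumes "q \<noteq> 1" "q \<noteq> 2" "\<not> clock_phase d q (rs ! (tapes M + 5))"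
  shows "clocked_delta M d q rs = (let qm = (if q = 3 then 3 else q - (21+d)) in
     if rs ! tapes M = 1 then (1, map (\<lambda>s. (s, Sm)) rs)
     else (let pr = delta M qm (take (tapes M) rs) in
        (sim_state d (fst pr), snd pr @ [(rs!tapes M, Lm)] @ map (\<lambda>s. (s, Sm)) (drop (tapes M+1) rs))))"
  using assms unfolding clocked_delta_def Let_def by auto

lemma length_clock_delta: "length (snd (clock_delta d q s0 s1 sx sa sb sc sr sd)) = 8"
  by (simp add: clock_delta_def keep_all_def)

lemma clock_step_explicit:
  assumes k: "tapes M \<ge> 3" and q: "q \<noteq> 1" "q \<noteq> 2"
    and phase: "clock_phase d q (head_symbol dd)"
    and pd: "clock_delta d (if q = 3 then 8 else q) (head_symbol inp) (head_symbol qt) (head_symbol x)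
      (head_symbol a) (head_symbol b) (head_symbol c) (head_symbol r) (head_symbol dd)
      = (q', [a0,a1,ax,aa,ab,ac,ar,ad])"
  shows "step (clocked_otm M d) \<phi> (clocked_config (tapes M) q inp qt x a b c r dd) =
     clocked_config (tapes M) q' (apply_action inp a0) (apply_action qt a1) (apply_action x ax)
       (apply_action a aa) (apply_action b ab) (apply_action c ac) (apply_action r ar) (apply_action dd ad)"
proof -
  let ?k = "tapes M"
  let ?S = "[head_symbol x, head_symbol a, head_symbol b, head_symbol c, head_symbol r, head_symbol dd]"
  let ?rs = "[head_symbol inp, head_symbol qt] @ replicate (?k - 2) 0 @ ?S"
  have k2: "?k \<ge> 2" using k by simp
  have rs: "map head_symbol ([inp, qt] @ replicate (?k - 2) blank_tape @ [x, a, b, c, r, dd]) = ?rs"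
    by (simp add: blank_tape_def head_symbol_def)
  have nth_S: "?rs ! (?k + i) = ?S ! i" for i
    by (rule nth_clock_tape[OF k2])
  have clock: "?rs ! ?k = head_symbol x" "?rs ! (?k + 1) = head_symbol a" "?rs ! (?k + 2) = head_symbol b"
     "?rs ! (?k + 3) = head_symbol c" "?rs ! (?k + 4) = head_symbol r" "?rs ! (?k + 5) = head_symbol dd"
    using nth_S[of 0] nth_S[of 1] nth_S[of 2] nth_S[of 3] nth_S[of 4] nth_S[of 5] by simp_all
  have mid: "map (\<lambda>i. (?rs ! i, Sm)) [2..<?k] = replicate (?k - 2) (0, Sm)"
    by (rule nth_equalityI) (simp_all add: nth_append)
  have "delta (clocked_otm M d) q ?rs = (q', [a0, a1] @ replicate (?k - 2) (0, Sm) @ [ax,aa,ab,ac,ar,ad])"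
    using clocked_delta_clock[OF q, of d ?rs M] phase pd
    unfolding clocked_otm_def otm.select_convs clock mid Let_def by simp
  then show ?thesis
    using q unfolding clocked_config_def step_delta[OF q] rs
    by (simp add: apply_action_blank)
qed

lemma clock_step:
  assumes k: "tapes M \<ge> 3" and q: "q \<noteq> 1" "q \<noteq> 2"
    and phase: "clock_phase d q (head_symbol dd)"
  shows "step (clocked_otm M d) \<phi> (clocked_config (tapes M) q inp qt x a b c r dd) =
    (let pr = clock_delta d (if q = 3 then 8 else q) (head_symbol inp) (head_symbol qt) (head_symbol x)
                (head_symbol a) (head_symbol b) (head_symbol c) (head_symbol r) (head_symbol dd)
     in clocked_config (tapes M) (fst pr) (apply_action inp (snd pr ! 0)) (apply_action qt (snd pr ! 1))
       (apply_action x (snd pr ! 2)) (apply_action a (snd pr ! 3)) (apply_action b (snd pr ! 4))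
       (apply_action c (snd pr ! 5)) (apply_action r (snd pr ! 6)) (apply_action dd (snd pr ! 7)))"
proof -
  obtain q' L where pr: "clock_delta d (if q = 3 then 8 else q) (head_symbol inp) (head_symbol qt)
      (head_symbol x) (head_symbol a) (head_symbol b) (head_symbol c) (head_symbol r) (head_symbol dd) = (q', L)"
    by fastforce
  then have "length L = 8"
    using length_clock_delta by (metis snd_conv)
  then obtain a0 a1 ax aa ab ac ar ad where L: "L = [a0,a1,ax,aa,ab,ac,ar,ad]"
    by (auto simp: numeral_eq_Suc length_Suc_conv)
  show ?thesis
    using clock_step_explicit[OF k q phase, of inp qt x a b c r q' a0 a1 ax aa ab ac ar ad] pr L by simp
qed

definition ones_prefix :: "(nat \<Rightarrow> nat) \<Rightarrow> nat \<Rightarrow> nat \<Rightarrow> nat" where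
  "ones_prefix c i = (\<lambda>j. if j < i then 1 else c j)"

lemma ones_prefix_0: "ones_prefix c 0 = c"
  by (simp add: ones_prefix_def)

lemma ones_prefix_Suc: "(ones_prefix c i)(i := Suc 0) = ones_prefix c (Suc i)"
  by (auto simp: ones_prefix_def fun_eq_iff)

lemma dec_ones_prefix: "dec ((ones_prefix c x)(x := 0)) = replicate x False"
proof -
  have "(LEAST i. ((ones_prefix c x)(x := 0)) i \<notin> {1, 2}) = x"
    by (rule Least_equality) (auto simp: ones_prefix_def split: if_splits)
  then show ?thesis
    unfolding dec_def by (intro nth_equalityI) (auto simp: ones_prefix_def)
qed

definition erased_prefix :: "word \<Rightarrow> nat \<Rightarrow> nat \<Rightarrow> nat" where
  "erased_prefix w i = (\<lambda>j. if j < i then 0 else enc w j)"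

lemma erased_prefix_0: "erased_prefix w 0 = enc w"
  by (simp add: erased_prefix_def)

lemma erased_prefix_Suc: "(erased_prefix w i)(i := 0) = erased_prefix w (Suc i)"
  by (auto simp: erased_prefix_def fun_eq_iff)

lemma erased_prefix_length: "erased_prefix w (length w) = (\<lambda>_. 0)"
  by (auto simp: erased_prefix_def fun_eq_iff enc_def)

lemma erased_prefix_at: "erased_prefix w i i = enc w i"
  by (simp add: erased_prefix_def)

definition round_time :: "nat \<Rightarrow> nat \<Rightarrow> nat" where
  "round_time v lu = (let y = v + lu + 2 in 2 * v + 2 * lu + 2 * y + y * (2 * y + 3) + 11)"

lemma round_time_le: "round_time v lu \<le> 10 * ((v + lu + 2) * (v + lu + 2))"
proof -
  define y where "y = v + lu + 2"
  have "round_time v lu + 4 = 2 * (y * y) + 7 * y + 11"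
    by (simp add: round_time_def y_def Let_def algebra_simps)
  moreover have "2 \<le> y"
    by (simp add: y_def)
  then have "2 * y \<le> y * y" "4 \<le> y * y"
    using mult_le_mono[OF \<open>2 \<le> y\<close> \<open>2 \<le> y\<close>] by (simp_all add: mult_le_mono1)
  ultimately show ?thesis
    unfolding y_def[symmetric] by linarith
qed

context
  fixes M :: otm and d :: nat and \<phi> :: strfun
  assumes three_tapes: "tapes M \<ge> 3"
begin

abbreviation "cstep \<equiv> step (clocked_otm M d) \<phi>"
abbreviation "cconf \<equiv> clocked_config (tapes M)"

lemmas clock_step_simps = clock_step[OF three_tapes] clock_phase_def clock_delta_def keep_all_def fun_upd_idem

lemma clock_start:
  "cstep (cconf 0 inp qt blank_tape blank_tape blank_tape blank_tape blank_tape blank_tape) =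
   cconf 20 inp qt (counter 0) (counter 0) (counter 0) (counter 0) (counter 0) (counter 0)"
proof -
  have e: "apply_action blank_tape (Suc 0, Sm) = counter 0"
    by (simp add: blank_tape_def counter_def apply_action_def counter_marks_def fun_eq_iff)
  have s: "head_symbol blank_tape = 0" by (simp add: blank_tape_def)
  show ?thesis by (simp add: clock_step_simps e s)
qed

lemma clock_load_rounds:
  "d = j + m \<Longrightarrow>
   (cstep ^^ Suc m) (cconf (20+j) inp qt x a b c r (counter j)) =
   cconf 4 inp qt x a b c r (counter d)"
proof (induction m arbitrary: j)
  case 0
  then show ?case by (simp add: clock_step_simps)
next
  case (Suc m)
  have "cstep (cconf (20+j) inp qt x a b c r (counter j)) =
      cconf (20 + Suc j) inp qt x a b c r (counter (Suc j))"
    using Suc.prems by (simp add: clock_step_simps)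
  then show ?case
    using Suc.IH[of "Suc j"] Suc.prems by (simp only: funpow_Suc_apply) simp
qed

lemma clock_measure_input: "length w = i + m \<Longrightarrow>
  (cstep ^^ Suc m) (cconf 4 (enc w, i) qt (counter xv) a b c (counter rv) dd) =
    cconf 5 (enc w, i+m) qt (counter (xv+m)) a b c (counter (rv+m)) dd"
proof (induction m arbitrary: i xv rv)
  case 0
  then show ?case by (simp add: clock_step_simps enc_blank)
next
  case (Suc m)
  have "cstep (cconf 4 (enc w, i) qt (counter xv) a b c (counter rv) dd) =
      cconf 4 (enc w, Suc i) qt (counter (Suc xv)) a b c (counter (Suc rv)) dd"
    using Suc.prems by (simp add: clock_step_simps enc_nonblank)
  then show ?case
    using Suc.IH[of "Suc i" "Suc xv" "Suc rv"] Suc.prems by (simp only: funpow_Suc_apply) simp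
qed

lemma clock_rewind_input:
  "(cstep ^^ Suc m) (cconf 5 (cs, i+m) qt x a b c (counter m) dd) =
   cconf 6 (cs, i) qt x a b c (counter 0) dd"
proof (induction m)
  case 0
  then show ?case by (simp add: clock_step_simps)
next
  case (Suc m)
  have "cstep (cconf 5 (cs, i + Suc m) qt x a b c (counter (Suc m)) dd) =
      cconf 5 (cs, i+m) qt x a b c (counter m) dd"
    by (simp add: clock_step_simps)
  then show ?case
    using Suc.IH by (simp only: funpow_Suc_apply)
qed

lemma clock_loop_exit:
  "cstep (cconf 6 inp qt x a b c r (counter 0)) =
   cconf 18 inp qt x a b c r (counter 0)"
  by (simp add: clock_step_simps)
lemma clock_loop_enter:
  "cstep (cconf 6 inp qt x a b c r (counter (Suc j))) =
   cconf 7 inp qt x a b c r (counter j)"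
  by (simp add: clock_step_simps)

lemma clock_write_query:
  "(cstep ^^ Suc m) (cconf 7 inp (ones_prefix cs i, i) (counter m) (counter av) b c r dd) =
   cconf 2 inp ((ones_prefix cs (i+m))(i+m := 0), i+m) (counter 0) (counter (av+m)) b c r dd"
proof (induction m arbitrary: i av)
  case 0
  then show ?case by (simp add: clock_step_simps fun_upd_def)
next
  case (Suc m)
  have "cstep (cconf 7 inp (ones_prefix cs i, i) (counter (Suc m)) (counter av) b c r dd) =
      cconf 7 inp (ones_prefix cs (Suc i), Suc i) (counter m) (counter (Suc av)) b c r dd"
    by (simp add: clock_step_simps ones_prefix_Suc)
  then show ?case
    using Suc.IH[of "Suc i" "Suc av"] by (simp only: funpow_Suc_apply) simp
qed

lemma clock_query:
  "cstep (cconf 2 inp qt x a b c r dd) =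
   cconf 3 inp (enc (\<phi> (dec (fst qt))), 0) x a b c r dd"
  by (simp add: step_def clocked_config_def)

lemma clock_restore_x:
  "q = 3 \<or> q = 8 \<Longrightarrow>
   (cstep ^^ Suc m) (cconf q inp qt (counter xv) (counter m) b c r (counter j)) =
   cconf 9 inp qt (counter (xv+m)) (counter 0) b c r (counter j)"
proof (induction m arbitrary: q xv)
  case 0
  then show ?case by (auto simp add: clock_step_simps)
next
  case (Suc m)
  have "cstep (cconf q inp qt (counter xv) (counter (Suc m)) b c r (counter j)) =
      cconf 8 inp qt (counter (Suc xv)) (counter m) b c r (counter j)"
    using Suc.prems by (auto simp add: clock_step_simps)
  then show ?case
    using Suc.IH[of 8 "Suc xv"] by (simp only: funpow_Suc_apply) simp
qed

lemma clock_measure_answer: "length w = i + m \<Longrightarrow>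
  (cstep ^^ Suc m) (cconf 9 inp (enc w, i) (counter xv) a b c (counter rv) dd) =
    cconf 10 inp (enc w, i+m) (counter (xv+m)) a b c (counter (rv+m)) dd"
proof (induction m arbitrary: i xv rv)
  case 0
  then show ?case by (simp add: clock_step_simps enc_blank)
next
  case (Suc m)
  have "cstep (cconf 9 inp (enc w, i) (counter xv) a b c (counter rv) dd) =
      cconf 9 inp (enc w, Suc i) (counter (Suc xv)) a b c (counter (Suc rv)) dd"
    using Suc.prems by (simp add: clock_step_simps enc_nonblank)
  then show ?case
    using Suc.IH[of "Suc i" "Suc xv" "Suc rv"] Suc.prems by (simp only: funpow_Suc_apply) simp
qed

lemma clock_rewind_answer:
  "(cstep ^^ Suc m) (cconf 10 inp (cs, i+m) x a b c (counter m) dd) =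
   cconf 11 inp (cs, i) x a b c (counter 0) dd"
proof (induction m)
  case 0
  then show ?case by (simp add: clock_step_simps)
next
  case (Suc m)
  have "cstep (cconf 10 inp (cs, i + Suc m) x a b c (counter (Suc m)) dd) =
      cconf 10 inp (cs, i+m) x a b c (counter m) dd"
    by (simp add: clock_step_simps)
  then show ?case
    using Suc.IH by (simp only: funpow_Suc_apply)
qed

lemma clock_add_two:
  "(cstep ^^ 2) (cconf 11 inp qt (counter xv) a b c r dd) =
   cconf 13 inp qt (counter (xv+2)) a b c r dd"
  by (simp add: clock_step_simps numeral_2_eq_2)

lemma clock_copy_x:
  "(cstep ^^ Suc m) (cconf 13 inp qt (counter m) (counter av) (counter bv) c r dd) =
   cconf 14 inp qt (counter 0) (counter (av+m)) (counter (bv+m)) c r dd"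
proof (induction m arbitrary: av bv)
  case 0
  then show ?case by (simp add: clock_step_simps)
next
  case (Suc m)
  have "cstep (cconf 13 inp qt (counter (Suc m)) (counter av) (counter bv) c r dd) =
      cconf 13 inp qt (counter m) (counter (Suc av)) (counter (Suc bv)) c r dd"
    by (simp add: clock_step_simps)
  then show ?case
    using Suc.IH[of "Suc av" "Suc bv"] by (simp only: funpow_Suc_apply) simp
qed

lemma clock_add_b:
  "(cstep ^^ Suc m) (cconf 15 inp qt (counter xv) a (counter m) (counter cv) r dd) =
   cconf 16 inp qt (counter (xv+m)) a (counter 0) (counter (cv+m)) r dd"
proof (induction m arbitrary: xv cv)
  case 0
  then show ?case by (simp add: clock_step_simps)
next
  case (Suc m)
  have "cstep (cconf 15 inp qt (counter xv) a (counter (Suc m)) (counter cv) r dd) =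
      cconf 15 inp qt (counter (Suc xv)) a (counter m) (counter (Suc cv)) r dd"
    by (simp add: clock_step_simps)
  then show ?case
    using Suc.IH[of "Suc xv" "Suc cv"] by (simp only: funpow_Suc_apply) simp
qed

lemma clock_restore_b:
  "(cstep ^^ Suc m) (cconf 16 inp qt x a (counter bv) (counter m) r dd) =
   cconf 14 inp qt x a (counter (bv+m)) (counter 0) r dd"
proof (induction m arbitrary: bv)
  case 0
  then show ?case by (simp add: clock_step_simps)
next
  case (Suc m)
  have "cstep (cconf 16 inp qt x a (counter bv) (counter (Suc m)) r dd) =
      cconf 16 inp qt x a (counter (Suc bv)) (counter m) r dd"
    by (simp add: clock_step_simps)
  then show ?case
    using Suc.IH[of "Suc bv"] by (simp only: funpow_Suc_apply) simp
qed

lemma clock_multiply: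
  "(cstep ^^ (m*(2*y+3)+1)) (cconf 14 inp qt (counter xv) (counter m) (counter y) (counter 0) r dd) =
   cconf 17 inp qt (counter (xv+m*y)) (counter 0) (counter y) (counter 0) r dd"
proof (induction m arbitrary: xv)
  case 0
  then show ?case by (simp add: clock_step_simps)
next
  case (Suc m)
  have "(cstep ^^ 1) (cconf 14 inp qt (counter xv) (counter (Suc m)) (counter y) (counter 0) r dd) =
      cconf 15 inp qt (counter xv) (counter m) (counter y) (counter 0) r dd"
    by (simp add: clock_step_simps)
  moreover have "(cstep ^^ Suc y) (cconf 15 inp qt (counter xv) (counter m) (counter y) (counter 0) r dd) =
      cconf 16 inp qt (counter (xv + y)) (counter m) (counter 0) (counter y) r dd"
    using clock_add_b[where xv=xv and a="counter m" and m=y and cv=0] by simp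
  moreover have "(cstep ^^ Suc y) (cconf 16 inp qt (counter (xv + y)) (counter m) (counter 0) (counter y) r dd) =
      cconf 14 inp qt (counter (xv + y)) (counter m) (counter y) (counter 0) r dd"
    using clock_restore_b[where x="counter (xv + y)" and a="counter m" and bv=0 and m=y] by simp
  ultimately have chain: "(cstep ^^ (1 + Suc y + Suc y + (m * (2 * y + 3) + 1)))
      (cconf 14 inp qt (counter xv) (counter (Suc m)) (counter y) (counter 0) r dd) =
      cconf 17 inp qt (counter (xv + y + m * y)) (counter 0) (counter y) (counter 0) r dd"
    using Suc.IH[of "xv + y"] by (blast intro: funpow_trans)
  have "Suc m * (2 * y + 3) + 1 = 1 + Suc y + Suc y + (m * (2 * y + 3) + 1)"
    "xv + Suc m * y = xv + y + m * y"
    by simp_all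
  then show ?case
    using chain by (simp only:)
qed

lemma clock_reset_b:
  "(cstep ^^ Suc m) (cconf 17 inp qt x a (counter m) c r dd) =
   cconf 6 inp qt x a (counter 0) c r dd"
proof (induction m)
  case 0
  then show ?case by (simp add: clock_step_simps)
next
  case (Suc m)
  have "cstep (cconf 17 inp qt x a (counter (Suc m)) c r dd) =
      cconf 17 inp qt x a (counter m) c r dd"
    by (simp add: clock_step_simps)
  then show ?case
    using Suc.IH by (simp only: funpow_Suc_apply)
qed

lemma clock_erase_query: "length w = i + m \<Longrightarrow>
  (cstep ^^ Suc m) (cconf 18 inp (erased_prefix w i, i) x a b c (counter rv) dd) =
    cconf 19 inp (erased_prefix w (i+m), i+m) x a b c (counter (rv+m)) dd"
proof (induction m arbitrary: i rv)
  case 0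
  then show ?case by (simp add: clock_step_simps enc_blank erased_prefix_at)
next
  case (Suc m)
  have "cstep (cconf 18 inp (erased_prefix w i, i) x a b c (counter rv) dd) =
      cconf 18 inp (erased_prefix w (Suc i), Suc i) x a b c (counter (Suc rv)) dd"
    using Suc.prems by (simp add: clock_step_simps enc_nonblank erased_prefix_at erased_prefix_Suc)
  then show ?case
    using Suc.IH[of "Suc i" "Suc rv"] Suc.prems by (simp only: funpow_Suc_apply) simp
qed

lemma clock_finish:
  "(cstep ^^ Suc m) (cconf 19 inp (cs, i+m) x a b c (counter m) (counter 0)) =
   cconf (21 + d) inp (cs, i) x a b c (counter 0) sim_flag"
proof (induction m)
  case 0
  have e: "apply_action (counter 0) (2, Sm) = sim_flag"
    by (simp add: apply_action_def counter_def sim_flag_def)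
  show ?case by (simp add: clock_step_simps e)
next
  case (Suc m)
  have "cstep (cconf 19 inp (cs, i + Suc m) x a b c (counter (Suc m)) (counter 0)) =
      cconf 19 inp (cs, i+m) x a b c (counter m) (counter 0)"
    by (simp add: clock_step_simps)
  then show ?case
    using Suc.IH by (simp only: funpow_Suc_apply)
qed

lemma clock_round_query:
  "(cstep ^^ (2 * v + 4)) (cconf 6 inp (enc w, 0) (counter v) (counter 0) (counter 0) (counter 0) (counter 0) (counter (Suc j))) =
   cconf 9 inp (enc (\<phi> (replicate v False)), 0) (counter v) (counter 0) (counter 0) (counter 0) (counter 0) (counter j)"
proof -
  let ?u = "\<phi> (replicate v False)"
  have "(cstep ^^ 1) (cconf 6 inp (enc w, 0) (counter v) (counter 0) (counter 0) (counter 0) (counter 0) (counter (Suc j))) =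
     cconf 7 inp (enc w, 0) (counter v) (counter 0) (counter 0) (counter 0) (counter 0) (counter j)"
    using clock_loop_enter by simp
  moreover have "(cstep ^^ Suc v) (cconf 7 inp (enc w, 0) (counter v) (counter 0) (counter 0) (counter 0) (counter 0) (counter j)) =
     cconf 2 inp ((ones_prefix (enc w) v)(v := 0), v) (counter 0) (counter v) (counter 0) (counter 0) (counter 0) (counter j)"
    using clock_write_query[where cs="enc w" and i=0 and m=v and av=0] by (simp add: ones_prefix_0)
  moreover have "(cstep ^^ 1) (cconf 2 inp ((ones_prefix (enc w) v)(v := 0), v) (counter 0) (counter v) (counter 0) (counter 0) (counter 0) (counter j)) =
     cconf 3 inp (enc ?u, 0) (counter 0) (counter v) (counter 0) (counter 0) (counter 0) (counter j)"
    using clock_query by (simp add: dec_ones_prefix)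
  moreover have "(cstep ^^ Suc v) (cconf 3 inp (enc ?u, 0) (counter 0) (counter v) (counter 0) (counter 0) (counter 0) (counter j)) =
     cconf 9 inp (enc ?u, 0) (counter v) (counter 0) (counter 0) (counter 0) (counter 0) (counter j)"
    using clock_restore_x[where q=3 and xv=0 and m=v] by simp
  ultimately have "(cstep ^^ (1 + Suc v + 1 + Suc v)) (cconf 6 inp (enc w, 0) (counter v) (counter 0) (counter 0) (counter 0) (counter 0) (counter (Suc j))) =
     cconf 9 inp (enc ?u, 0) (counter v) (counter 0) (counter 0) (counter 0) (counter 0) (counter j)"
    by (blast intro: funpow_trans)
  moreover have "1 + Suc v + 1 + Suc v = 2 * v + 4"
    by simp
  ultimately show ?thesis
    by (simp only:)
qed

lemma clock_round_square:
  assumes y: "y = v + length u + 2"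
  shows "(cstep ^^ (2 * length u + 2 * y + y * (2 * y + 3) + 7))
      (cconf 9 inp (enc u, 0) (counter v) (counter 0) (counter 0) (counter 0) (counter 0) dd) =
    cconf 6 inp (enc u, 0) (counter (y * y)) (counter 0) (counter 0) (counter 0) (counter 0) dd"
proof -
  have "(cstep ^^ Suc (length u)) (cconf 9 inp (enc u, 0) (counter v) (counter 0) (counter 0) (counter 0) (counter 0) dd) =
     cconf 10 inp (enc u, length u) (counter (v + length u)) (counter 0) (counter 0) (counter 0) (counter (length u)) dd"
    using clock_measure_answer[where w=u and i=0 and m="length u" and xv=v and rv=0] by simp
  moreover have "(cstep ^^ Suc (length u)) (cconf 10 inp (enc u, length u) (counter (v + length u)) (counter 0) (counter 0) (counter 0) (counter (length u)) dd) =
     cconf 11 inp (enc u, 0) (counter (v + length u)) (counter 0) (counter 0) (counter 0) (counter 0) dd"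
    using clock_rewind_answer[where cs="enc u" and i=0 and m="length u"] by simp
  moreover have "(cstep ^^ 2) (cconf 11 inp (enc u, 0) (counter (v + length u)) (counter 0) (counter 0) (counter 0) (counter 0) dd) =
     cconf 13 inp (enc u, 0) (counter y) (counter 0) (counter 0) (counter 0) (counter 0) dd"
    using clock_add_two by (simp add: y)
  moreover have "(cstep ^^ Suc y) (cconf 13 inp (enc u, 0) (counter y) (counter 0) (counter 0) (counter 0) (counter 0) dd) =
     cconf 14 inp (enc u, 0) (counter 0) (counter y) (counter y) (counter 0) (counter 0) dd"
    using clock_copy_x[where m=y and av=0 and bv=0] by simp
  moreover have "(cstep ^^ (y * (2 * y + 3) + 1)) (cconf 14 inp (enc u, 0) (counter 0) (counter y) (counter y) (counter 0) (counter 0) dd) =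
     cconf 17 inp (enc u, 0) (counter (y * y)) (counter 0) (counter y) (counter 0) (counter 0) dd"
    using clock_multiply[where m=y and y=y and xv=0] by simp
  moreover have "(cstep ^^ Suc y) (cconf 17 inp (enc u, 0) (counter (y * y)) (counter 0) (counter y) (counter 0) (counter 0) dd) =
     cconf 6 inp (enc u, 0) (counter (y * y)) (counter 0) (counter 0) (counter 0) (counter 0) dd"
    using clock_reset_b[where m=y] by simp
  ultimately have "(cstep ^^ (Suc (length u) + Suc (length u) + 2 + Suc y + (y * (2 * y + 3) + 1) + Suc y))
      (cconf 9 inp (enc u, 0) (counter v) (counter 0) (counter 0) (counter 0) (counter 0) dd) =
    cconf 6 inp (enc u, 0) (counter (y * y)) (counter 0) (counter 0) (counter 0) (counter 0) dd"
    by (blast intro: funpow_trans)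
  moreover have "Suc (length u) + Suc (length u) + 2 + Suc y + (y * (2 * y + 3) + 1) + Suc y =
      2 * length u + 2 * y + y * (2 * y + 3) + 7"
    by simp
  ultimately show ?thesis
    by (simp only:)
qed

lemma clock_round:
  "(cstep ^^ round_time v (zero_query_size \<phi> v))
     (cconf 6 inp (enc w, 0) (counter v) (counter 0) (counter 0) (counter 0) (counter 0) (counter (Suc j))) =
   cconf 6 inp (enc (\<phi> (replicate v False)), 0) (counter (clock_square (zero_query_size \<phi>) v))
     (counter 0) (counter 0) (counter 0) (counter 0) (counter j)"
proof -
  define u where "u = \<phi> (replicate v False)"
  define y where "y = v + length u + 2"
  have "round_time v (zero_query_size \<phi> v) = 2 * v + 4 + (2 * length u + 2 * y + y * (2 * y + 3) + 7)"
    by (simp add: round_time_def zero_query_size_def u_def y_def Let_def)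
  moreover have "clock_square (zero_query_size \<phi>) v = y * y"
    by (simp add: clock_square_def zero_query_size_def u_def y_def)
  ultimately show ?thesis
    using funpow_trans[OF clock_round_query[of v, folded u_def] clock_round_square[OF y_def]] by (simp only: u_def)
qed

lemma clock_rounds:
  "\<exists>t w'. (cstep ^^ t) (cconf 6 inp (enc w, 0) (counter v) (counter 0) (counter 0) (counter 0) (counter 0) (counter j)) =
     cconf 6 inp (enc w', 0) (counter (clock_bound j (zero_query_size \<phi>) v)) (counter 0) (counter 0) (counter 0) (counter 0) (counter 0)
   \<and> t \<le> 10 * j * clock_bound j (zero_query_size \<phi>) v
   \<and> length w' \<le> max (length w) (clock_bound j (zero_query_size \<phi>) v)"
proof (induction j arbitrary: v w)
  case 0
  then show ?case by (rule exI[of _ 0]) auto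
next
  case (Suc j)
  let ?l = "zero_query_size \<phi>"
  define u where "u = \<phi> (replicate v False)"
  define X where "X = clock_bound (Suc j) ?l v"
  obtain t w' where t: "(cstep ^^ t) (cconf 6 inp (enc u, 0) (counter (clock_square ?l v)) (counter 0) (counter 0) (counter 0) (counter 0) (counter j)) =
       cconf 6 inp (enc w', 0) (counter X) (counter 0) (counter 0) (counter 0) (counter 0) (counter 0)"
    and tb: "t \<le> 10 * j * X" and wb: "length w' \<le> max (length u) X"
    using Suc.IH[of u "clock_square ?l v"] unfolding X_def clock_bound_Suc_right by blast
  have square_le: "clock_square ?l v \<le> X"
    unfolding X_def clock_bound_Suc_right by (rule clock_bound_ge)
  then have "length u \<le> X"
    using clock_square_ge(2)[where v=v and l="?l"] by (simp add: zero_query_size_def u_def)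
  moreover have "round_time v (?l v) \<le> 10 * X"
    using round_time_le[of v "?l v"] square_le by (simp add: clock_square_def)
  moreover have "(cstep ^^ (round_time v (?l v) + t))
      (cconf 6 inp (enc w, 0) (counter v) (counter 0) (counter 0) (counter 0) (counter 0) (counter (Suc j))) =
    cconf 6 inp (enc w', 0) (counter X) (counter 0) (counter 0) (counter 0) (counter 0) (counter 0)"
    using funpow_trans[OF clock_round[of v, folded u_def] t] .
  moreover have "round_time v (?l v) + t \<le> 10 * Suc j * X"
    using \<open>round_time v (?l v) \<le> 10 * X\<close> tb by (simp add: add_mult_distrib)
  ultimately show ?case
    using wb unfolding X_def by (intro exI[of _ "round_time v (?l v) + t"] exI[of _ w'] conjI) auto
qed

lemma clock_setup:
  "(cstep ^^ (2 * length a + d + 4)) (init_config (clocked_otm M d) a) =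
   cconf 6 (enc a, 0) (enc [], 0) (counter (length a)) (counter 0) (counter 0) (counter 0) (counter 0) (counter d)"
proof -
  let ?n = "length a"
  have "replicate (tapes M + 5) blank_tape =
      blank_tape # replicate (tapes M - 2) blank_tape @ replicate 6 blank_tape"
    using three_tapes by (simp flip: replicate_add replicate_Suc)
  then have init: "init_config (clocked_otm M d) a =
      cconf 0 (enc a, 0) blank_tape blank_tape blank_tape blank_tape blank_tape blank_tape blank_tape"
    by (simp add: init_config_def clocked_otm_def clocked_config_def blank_tape_def numeral_eq_Suc)
  have "(cstep ^^ 1) (cconf 0 (enc a, 0) blank_tape blank_tape blank_tape blank_tape blank_tape blank_tape blank_tape) =
      cconf 20 (enc a, 0) blank_tape (counter 0) (counter 0) (counter 0) (counter 0) (counter 0) (counter 0)"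
    using clock_start by simp
  moreover have "(cstep ^^ Suc d) (cconf 20 (enc a, 0) blank_tape (counter 0) (counter 0) (counter 0) (counter 0) (counter 0) (counter 0)) =
      cconf 4 (enc a, 0) blank_tape (counter 0) (counter 0) (counter 0) (counter 0) (counter 0) (counter d)"
    using clock_load_rounds[where j=0 and m=d] by simp
  moreover have "(cstep ^^ Suc ?n) (cconf 4 (enc a, 0) blank_tape (counter 0) (counter 0) (counter 0) (counter 0) (counter 0) (counter d)) =
      cconf 5 (enc a, ?n) blank_tape (counter ?n) (counter 0) (counter 0) (counter 0) (counter ?n) (counter d)"
    using clock_measure_input[where w=a and i=0 and m="?n" and xv=0 and rv=0] by simp
  moreover have "(cstep ^^ Suc ?n) (cconf 5 (enc a, ?n) blank_tape (counter ?n) (counter 0) (counter 0) (counter 0) (counter ?n) (counter d)) =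
      cconf 6 (enc a, 0) (enc [], 0) (counter ?n) (counter 0) (counter 0) (counter 0) (counter 0) (counter d)"
    using clock_rewind_input[where cs="enc a" and i=0 and m="?n"] by (simp add: enc_Nil blank_tape_def)
  ultimately have "(cstep ^^ (1 + Suc d + Suc ?n + Suc ?n))
      (cconf 0 (enc a, 0) blank_tape blank_tape blank_tape blank_tape blank_tape blank_tape blank_tape) =
      cconf 6 (enc a, 0) (enc [], 0) (counter ?n) (counter 0) (counter 0) (counter 0) (counter 0) (counter d)"
    by (blast intro: funpow_trans)
  moreover have "1 + Suc d + Suc ?n + Suc ?n = 2 * ?n + d + 4"
    by simp
  ultimately show ?thesis
    unfolding init by (simp only:)
qed

lemma clock_teardown:
  "(cstep ^^ (2 * length w + 3)) (cconf 6 (enc a, 0) (enc w, 0) (counter X) (counter 0) (counter 0) (counter 0) (counter 0) (counter 0)) =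
   (sim_state d 0, snd (init_config M a) @ clock_tapes X)"
proof -
  have "(cstep ^^ 1) (cconf 6 (enc a, 0) (enc w, 0) (counter X) (counter 0) (counter 0) (counter 0) (counter 0) (counter 0)) =
      cconf 18 (enc a, 0) (enc w, 0) (counter X) (counter 0) (counter 0) (counter 0) (counter 0) (counter 0)"
    using clock_loop_exit by simp
  moreover have "(cstep ^^ Suc (length w)) (cconf 18 (enc a, 0) (enc w, 0) (counter X) (counter 0) (counter 0) (counter 0) (counter 0) (counter 0)) =
      cconf 19 (enc a, 0) (\<lambda>_. 0, length w) (counter X) (counter 0) (counter 0) (counter 0) (counter (length w)) (counter 0)"
    using clock_erase_query[where w=w and i=0 and m="length w" and rv=0]
    by (simp add: erased_prefix_0 erased_prefix_length)
  moreover have "(cstep ^^ Suc (length w)) (cconf 19 (enc a, 0) (\<lambda>_. 0, length w) (counter X) (counter 0) (counter 0) (counter 0) (counter (length w)) (counter 0)) =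
      cconf (21 + d) (enc a, 0) (\<lambda>_. 0, 0) (counter X) (counter 0) (counter 0) (counter 0) (counter 0) sim_flag"
    using clock_finish[where cs="\<lambda>_. 0" and i=0 and m="length w"] by simp
  ultimately have "(cstep ^^ (1 + Suc (length w) + Suc (length w)))
      (cconf 6 (enc a, 0) (enc w, 0) (counter X) (counter 0) (counter 0) (counter 0) (counter 0) (counter 0)) =
    cconf (21 + d) (enc a, 0) (\<lambda>_. 0, 0) (counter X) (counter 0) (counter 0) (counter 0) (counter 0) sim_flag"
    by (blast intro: funpow_trans)
  moreover have "tapes M - 1 = Suc (tapes M - 2)"
    using three_tapes by simp
  then have "cconf (21 + d) (enc a, 0) (\<lambda>_. 0, 0) (counter X) (counter 0) (counter 0) (counter 0) (counter 0) sim_flag =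
      (sim_state d 0, snd (init_config M a) @ clock_tapes X)"
    by (simp add: clocked_config_def sim_state_def init_config_def clock_tapes_def blank_tape_def)
  moreover have "1 + Suc (length w) + Suc (length w) = 2 * length w + 3"
    by simp
  ultimately show ?thesis
    by (simp only:)
qed

lemma clock_preparation:
  "\<exists>p. (cstep ^^ p) (init_config (clocked_otm M d) a) =
      (sim_state d 0, snd (init_config M a) @ clock_tapes (clock_bound d (zero_query_size \<phi>) (length a)))
    \<and> p \<le> (10 * d + 2) * clock_bound d (zero_query_size \<phi>) (length a) + 2 * length a + d + 7"
proof -
  define X where "X = clock_bound d (zero_query_size \<phi>) (length a)"
  obtain t w where rounds: "(cstep ^^ t) (cconf 6 (enc a, 0) (enc [], 0) (counter (length a)) (counter 0) (counter 0) (counter 0) (counter 0) (counter d)) =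
     cconf 6 (enc a, 0) (enc w, 0) (counter X) (counter 0) (counter 0) (counter 0) (counter 0) (counter 0)"
    and "t \<le> 10 * d * X" and "length w \<le> X"
    using clock_rounds[of "(enc a, 0)" "[]" "length a" d] unfolding X_def by auto
  then have "2 * length a + d + 4 + t + (2 * length w + 3) \<le> (10 * d + 2) * X + 2 * length a + d + 7"
    by (simp add: algebra_simps)
  moreover have "(cstep ^^ (2 * length a + d + 4 + t + (2 * length w + 3))) (init_config (clocked_otm M d) a) =
      (sim_state d 0, snd (init_config M a) @ clock_tapes X)"
    using funpow_trans[OF funpow_trans[OF clock_setup rounds] clock_teardown] .
  ultimately show ?thesis
    unfolding X_def by blast
qed

end

lemma map_head_symbol_clock_tapes:
  "map head_symbol (clock_tapes v) = [counter_marks v, 1, 1, 1, 1, 2]"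
  by (simp add: clock_tapes_def sim_flag_def)

lemma clock_delta_symbols:
  "x \<in> set (snd (clock_delta d q s0 s1 sx sa sb sc sr sd)) \<Longrightarrow> fst x \<in> {s0,s1,sx,sa,sb,sc,sr,sd,0,1,2}"
  unfolding clock_delta_def keep_all_def by (auto split: if_split_asm)

lemma clock_delta_state: "q < 21 + d \<Longrightarrow> fst (clock_delta d q s0 s1 sx sa sb sc sr sd) \<le> 21 + d"
  unfolding clock_delta_def keep_all_def by (simp split: if_split)

context
  fixes M :: otm and d :: nat and \<phi> :: strfun
  assumes wf: "wf_otm M"
begin

abbreviation "sstep \<equiv> step (clocked_otm M d) \<phi>"

lemma three_tapes: "tapes M \<ge> 3"
  using wf by (simp add: wf_otm_def)

lemma clocked_delta_sim_state:
  assumes valid: "valid_config M (q, ts)" and q: "q \<noteq> 1" "q \<noteq> 2"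
  shows "delta (clocked_otm M d) (sim_state d q) (map head_symbol ts @ [counter_marks v, 1, 1, 1, 1, 2]) =
    (if counter_marks v = 1 then (1, map (\<lambda>s. (s, Sm)) (map head_symbol ts @ [counter_marks v, 1, 1, 1, 1, 2]))
     else (sim_state d (fst (delta M q (map head_symbol ts))),
           snd (delta M q (map head_symbol ts)) @ [(counter_marks v, Lm)] @ map (\<lambda>s. (s, Sm)) [1, 1, 1, 1, 2]))"
proof -
  let ?rs = "map head_symbol ts @ [counter_marks v, 1, 1, 1, 1, 2]"
  have "length ts = tapes M"
    using valid by (simp add: valid_config_def)
  then have clock: "?rs ! tapes M = counter_marks v" "?rs ! (tapes M + 5) = 2"
    and "take (tapes M) ?rs = map head_symbol ts" "drop (tapes M + 1) ?rs = [1, 1, 1, 1, 2]"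
    by (simp_all add: nth_append)
  moreover have "sim_state d q \<noteq> 1" "sim_state d q \<noteq> 2" "\<not> clock_phase d (sim_state d q) 2"
    and "(if sim_state d q = 3 then 3 else sim_state d q - (21 + d)) = q"
    using q by (auto simp: sim_state_def clock_phase_def)
  ultimately show ?thesis
    using clocked_delta_sim[where q="sim_state d q" and M=M and d=d and rs="?rs"] unfolding clocked_otm_def by (simp add: Let_def)
qed

lemma clocked_sim_step:
  assumes valid: "valid_config M (q, ts)" and q: "q \<noteq> 1" "q \<noteq> 2"
  shows "fst (sstep (sim_state d q, ts @ clock_tapes 0)) = 1"
    and "sstep (sim_state d q, ts @ clock_tapes (Suc w)) =
      (sim_state d (fst (step M \<phi> (q, ts))), snd (step M \<phi> (q, ts)) @ clock_tapes w)"
proof -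
  have sq: "sim_state d q \<noteq> 1" "sim_state d q \<noteq> 2"
    using q by (simp_all add: sim_state_def)
  have rs: "map head_symbol (ts @ clock_tapes u) = map head_symbol ts @ [counter_marks u, 1, 1, 1, 1, 2]" for u
    by (simp add: map_head_symbol_clock_tapes)
  show "fst (sstep (sim_state d q, ts @ clock_tapes 0)) = 1"
    unfolding step_delta[OF sq] rs clocked_delta_sim_state[OF valid q] by simp
  obtain q' acts where da: "delta M q (map head_symbol ts) = (q', acts)" by fastforce
  have "length ts = tapes M" "q < states M" "set (map head_symbol ts) \<subseteq> {..<symbols M}"
    using valid by (auto simp: valid_config_def head_symbol_def)
  then have "length acts = length ts"
    using wf da unfolding wf_otm_def by (metis length_map snd_conv)
  moreover have "map (\<lambda>(t, a). apply_action t a)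
      (zip (clock_tapes (Suc w)) ((counter_marks (Suc w), Lm) # map (\<lambda>s. (s, Sm)) [1, 1, 1, 1, 2])) = clock_tapes w"
    by (simp add: clock_tapes_def sim_flag_def apply_action_def counter_def fun_upd_idem)
  ultimately show "sstep (sim_state d q, ts @ clock_tapes (Suc w)) =
      (sim_state d (fst (step M \<phi> (q, ts))), snd (step M \<phi> (q, ts)) @ clock_tapes w)"
    using q unfolding step_delta[OF sq] rs clocked_delta_sim_state[OF valid q] step_delta[OF q] da
    by simp
qed

lemma clocked_sim_query:
  assumes "valid_config M (2, ts)"
  shows "sstep (2, ts @ clock_tapes w) = (3, snd (step M \<phi> (2, ts)) @ clock_tapes w)"
    and "fst (step M \<phi> (2, ts)) = 3"
proof -
  have "length ts \<ge> 3"
    using assms three_tapes by (simp add: valid_config_def)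
  then show "sstep (2, ts @ clock_tapes w) = (3, snd (step M \<phi> (2, ts)) @ clock_tapes w)"
    by (simp add: step_def list_update_append nth_append)
  show "fst (step M \<phi> (2, ts)) = 3"
    by (simp add: step_def)
qed

lemma clocked_sim_halts:
  "valid_config M (q, ts) \<Longrightarrow> \<exists>t \<le> 2 * v + 2. fst ((sstep ^^ t) (sim_state d q, ts @ clock_tapes v)) = 1"
proof (induction v arbitrary: q ts)
  case (0 q ts)
  consider "q = 1" | "q = 2" | "q \<noteq> 1" "q \<noteq> 2" by blast
  then show ?case
  proof cases
    case 1
    then show ?thesis by (intro exI[of _ 0]) (simp add: sim_state_def)
  next
    case 2
    let ?s = "step M \<phi> (2, ts)"
    have "valid_config M (3, snd ?s)"
      using valid_step[OF wf, of 2 ts \<phi>] 0 2 clocked_sim_query(2)[of ts] by (metis prod.collapse)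
    then have "fst (sstep (sstep (2, ts @ clock_tapes 0))) = 1"
      using clocked_sim_step(1)[of 3 "snd ?s"] 0 2 clocked_sim_query(1) by simp
    then show ?thesis
      using 2 by (intro exI[of _ 2]) (simp add: funpow_2_apply)
  next
    case 3
    then show ?thesis
      using clocked_sim_step(1)[OF 0] by (intro exI[of _ 1]) simp
  qed
next
  case (Suc v q ts)
  consider "q = 1" | "q = 2" | "q \<noteq> 1" "q \<noteq> 2" by blast
  then show ?case
  proof cases
    case 1
    then show ?thesis by (intro exI[of _ 0]) (simp add: sim_state_def)
  next
    case 2
    let ?s = "step M \<phi> (2, ts)"
    let ?s' = "step M \<phi> (3, snd ?s)"
    have valid3: "valid_config M (3, snd ?s)"
      using valid_step[OF wf, of 2 ts \<phi>] Suc.prems 2 clocked_sim_query(2)[of ts] by (metis prod.collapse)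
    obtain t where "t \<le> 2 * v + 2" "fst ((sstep ^^ t) (sim_state d (fst ?s'), snd ?s' @ clock_tapes v)) = 1"
      using Suc.IH[of "fst ?s'" "snd ?s'"] valid_step[OF wf valid3] by auto
    moreover have "(sstep ^^ 2) (sim_state d q, ts @ clock_tapes (Suc v)) = (sim_state d (fst ?s'), snd ?s' @ clock_tapes v)"
      using 2 Suc.prems clocked_sim_query(1) clocked_sim_step(2)[OF valid3] by (simp add: funpow_2_apply)
    ultimately show ?thesis
      by (intro exI[of _ "t + 2"]) (simp only: funpow_add comp_apply, simp)
  next
    case 3
    let ?s = "step M \<phi> (q, ts)"
    obtain t where "t \<le> 2 * v + 2" "fst ((sstep ^^ t) (sim_state d (fst ?s), snd ?s @ clock_tapes v)) = 1"
      using Suc.IH[of "fst ?s" "snd ?s"] valid_step[OF wf Suc.prems] by auto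
    then show ?thesis
      using clocked_sim_step(2)[OF Suc.prems 3] by (intro exI[of _ "t + 1"]) (simp only: funpow_add comp_apply, simp)
  qed
qed

lemma clocked_sim_run:
  assumes "t \<le> otm_time M \<phi> a" and "otm_time M \<phi> a \<le> X"
  shows "\<exists>u \<le> t. (sstep ^^ t) (sim_state d 0, snd (init_config M a) @ clock_tapes X) =
     (sim_state d (fst (run M \<phi> a t)), snd (run M \<phi> a t) @ clock_tapes (X - u))"
  using assms(1)
proof (induction t)
  case 0
  then show ?case by (simp add: run_def init_config_def)
next
  case (Suc t)
  then obtain u where "u \<le> t" and run_t: "(sstep ^^ t) (sim_state d 0, snd (init_config M a) @ clock_tapes X) =
     (sim_state d (fst (run M \<phi> a t)), snd (run M \<phi> a t) @ clock_tapes (X - u))" by auto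
  obtain q ts where qts: "run M \<phi> a t = (q, ts)" by fastforce
  have valid: "valid_config M (q, ts)"
    using valid_run[OF wf, of \<phi> a t] qts by simp
  have "q \<noteq> 1"
    using otm_time_not_halted[of t M \<phi> a] Suc.prems qts by simp
  have run_Suc: "run M \<phi> a (Suc t) = step M \<phi> (q, ts)"
    using qts by (simp add: run_def)
  have run_Suc_t: "(sstep ^^ Suc t) (sim_state d 0, snd (init_config M a) @ clock_tapes X) =
      sstep (sim_state d q, ts @ clock_tapes (X - u))"
    using run_t qts by simp
  consider "q = 2" | "q \<noteq> 2" by blast
  then show ?case
  proof cases
    case 1
    then show ?thesis
      using clocked_sim_query(1)[of ts "X - u"] clocked_sim_query(2)[of ts] valid run_Suc run_Suc_t \<open>u \<le> t\<close> by (intro exI[of _ u]) auto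
  next
    case 2
    have "X - u = Suc (X - Suc u)"
      using \<open>u \<le> t\<close> Suc.prems assms(2) by simp
    then show ?thesis
      using clocked_sim_step(2)[OF valid \<open>q \<noteq> 1\<close> 2, of "X - Suc u"] run_Suc run_Suc_t \<open>u \<le> t\<close>
      by (intro exI[of _ "Suc u"]) simp
  qed
qed

lemma clocked_delta_clock_wf:
  assumes q: "q \<noteq> 1" "q \<noteq> 2" "clock_phase d q (rs ! (tapes M + 5))"
    and rs: "length rs = tapes M + 6" "set rs \<subseteq> {..<symbols M}"
  shows "fst (clocked_delta M d q rs) < 21 + d + states M \<and> length (snd (clocked_delta M d q rs)) = tapes M + 6 \<and>
    (\<forall>x \<in> set (snd (clocked_delta M d q rs)). fst x < symbols M)"
proof -
  let ?k = "tapes M"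
  define pr where "pr = clock_delta d (if q = 3 then 8 else q) (rs!0) (rs!1) (rs!?k) (rs!(?k+1))
     (rs!(?k+2)) (rs!(?k+3)) (rs!(?k+4)) (rs!(?k+5))"
  have rs_less: "i < ?k + 6 \<Longrightarrow> rs ! i < symbols M" for i
    using rs by (auto simp: subset_iff)
  have len: "length (snd pr) = 8"
    unfolding pr_def by (rule length_clock_delta)
  have "fst pr \<le> 21 + d"
    unfolding pr_def by (rule clock_delta_state) (use q in \<open>auto simp: clock_phase_def\<close>)
  moreover have syms: "\<forall>x\<in>set (snd pr). fst x < symbols M"
  proof
    fix x
    assume "x \<in> set (snd pr)"
    then have "fst x \<in> {rs!0, rs!1, rs!?k, rs!(?k+1), rs!(?k+2), rs!(?k+3), rs!(?k+4), rs!(?k+5), 0, 1, 2}"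
      unfolding pr_def by (rule clock_delta_symbols)
    moreover have "3 \<le> symbols M"
      using wf by (simp add: wf_otm_def)
    ultimately show "fst x < symbols M"
      using rs_less[of 0] rs_less[of 1] rs_less[of ?k] rs_less[of "?k+1"] rs_less[of "?k+2"] rs_less[of "?k+3"]
        rs_less[of "?k+4"] rs_less[of "?k+5"] three_tapes by auto
  qed
  moreover have "snd pr ! 0 \<in> set (snd pr)" "snd pr ! 1 \<in> set (snd pr)"
    using len by auto
  moreover have "\<forall>x\<in>set (drop 2 (snd pr)). fst x < symbols M"
    using syms by (meson in_set_dropD)
  moreover have "clocked_delta M d q rs =
      (fst pr, [snd pr ! 0, snd pr ! 1] @ map (\<lambda>i. (rs!i, Sm)) [2..<?k] @ drop 2 (snd pr))"
    unfolding pr_def using clocked_delta_clock[OF q] unfolding Let_def .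
  ultimately show ?thesis
    using len rs_less wf by (auto simp: wf_otm_def)
qed

lemma clocked_delta_sim_wf:
  assumes q: "q < 21 + d + states M" "q \<noteq> 1" "q \<noteq> 2" "\<not> clock_phase d q (rs ! (tapes M + 5))"
    and rs: "length rs = tapes M + 6" "set rs \<subseteq> {..<symbols M}"
  shows "fst (clocked_delta M d q rs) < 21 + d + states M \<and> length (snd (clocked_delta M d q rs)) = tapes M + 6 \<and>
    (\<forall>x \<in> set (snd (clocked_delta M d q rs)). fst x < symbols M)"
proof -
  let ?k = "tapes M"
  define qm where "qm = (if q = 3 then 3 else q - (21 + d))"
  have "qm < states M"
    using q wf unfolding qm_def clock_phase_def wf_otm_def by auto
  moreover have "length (take ?k rs) = ?k" "set (take ?k rs) \<subseteq> {..<symbols M}"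
    using rs by (auto dest: in_set_takeD)
  ultimately have "fst (delta M qm (take ?k rs)) < states M" "length (snd (delta M qm (take ?k rs))) = ?k"
    "\<forall>x\<in>set (snd (delta M qm (take ?k rs))). fst x < symbols M"
    using wf unfolding wf_otm_def by blast+
  moreover have "rs ! ?k < symbols M"
    using rs(2) nth_mem[of ?k rs] rs(1) by (simp add: subset_iff)
  moreover have "\<forall>x\<in>set (drop (?k + 1) rs). x < symbols M"
    using rs by (auto dest: in_set_dropD)
  moreover have "clocked_delta M d q rs = (if rs ! ?k = 1 then (1, map (\<lambda>s. (s, Sm)) rs)
      else (sim_state d (fst (delta M qm (take ?k rs))),
        snd (delta M qm (take ?k rs)) @ [(rs!?k, Lm)] @ map (\<lambda>s. (s, Sm)) (drop (?k+1) rs)))"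
    using clocked_delta_sim[OF q(2-4)] unfolding qm_def Let_def by simp
  ultimately show ?thesis
    using rs q wf by (auto simp: subset_iff sim_state_def wf_otm_def)
qed

lemma wf_clocked_otm: "wf_otm (clocked_otm M d)"
proof -
  have "fst (clocked_delta M d q rs) < 21 + d + states M \<and> length (snd (clocked_delta M d q rs)) = tapes M + 6 \<and>
      (\<forall>x \<in> set (snd (clocked_delta M d q rs)). fst x < symbols M)"
    if q: "q < 21 + d + states M" and rs: "length rs = tapes M + 6" "set rs \<subseteq> {..<symbols M}" for q rs
  proof (cases "q = 1 \<or> q = 2")
    case True
    then have "clocked_delta M d q rs = (q, map (\<lambda>s. (s, Sm)) rs)"
      unfolding clocked_delta_def by auto
    then show ?thesis
      using rs q by (auto simp: subset_iff)
  next
    case False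
    then show ?thesis
      using clocked_delta_clock_wf clocked_delta_sim_wf q rs by blast
  qed
  then show ?thesis
    using wf unfolding wf_otm_def clocked_otm_def by (simp; blast)
qed

lemma clocked_otm_time:
  "halts (clocked_otm M d) \<phi> a \<and>
   otm_time (clocked_otm M d) \<phi> a \<le> (10 * d + 4) * clock_bound d (size_fn \<phi>) (length a) + 2 * length a + d + 9"
proof -
  define X where "X = clock_bound d (zero_query_size \<phi>) (length a)"
  obtain p where p: "(sstep ^^ p) (init_config (clocked_otm M d) a) = (sim_state d 0, snd (init_config M a) @ clock_tapes X)"
    and "p \<le> (10 * d + 2) * X + 2 * length a + d + 7"
    using clock_preparation[OF three_tapes, of d \<phi> a] unfolding X_def by blast
  moreover have "valid_config M (0, snd (init_config M a))"
    using valid_init_config[OF wf, of a] by (simp add: init_config_def)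
  then obtain t where "t \<le> 2 * X + 2" and "fst ((sstep ^^ t) (sim_state d 0, snd (init_config M a) @ clock_tapes X)) = 1"
    using clocked_sim_halts by blast
  ultimately have "fst (run (clocked_otm M d) \<phi> a (t + p)) = 1" and "t + p \<le> (10 * d + 4) * X + 2 * length a + d + 9"
    unfolding run_add by (simp_all add: algebra_simps)
  moreover have "X \<le> clock_bound d (size_fn \<phi>) (length a)"
    unfolding X_def by (rule clock_bound_mono_size) (simp_all add: zero_query_size_le_size_fn mono_size_fn)
  ultimately show ?thesis
    using halts_otm_time_le[of "clocked_otm M d" \<phi> a "t + p"]
    by (meson add_le_mono1 le_trans mult_le_mono2)
qed

lemma clocked_otm_output:
  assumes "halts M \<phi> a" and "otm_time M \<phi> a \<le> clock_bound d (zero_query_size \<phi>) (length a)"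
  shows "otm_output (clocked_otm M d) \<phi> a = otm_output M \<phi> a"
proof -
  define X where "X = clock_bound d (zero_query_size \<phi>) (length a)"
  define T where "T = otm_time M \<phi> a"
  have halted: "fst (run M \<phi> a T) = 1"
    using assms(1) unfolding halts_def T_def otm_time_def by (rule LeastI_ex)
  obtain p where p: "(sstep ^^ p) (init_config (clocked_otm M d) a) = (sim_state d 0, snd (init_config M a) @ clock_tapes X)"
    using clock_preparation[OF three_tapes, of d \<phi> a] unfolding X_def by blast
  obtain u where "run (clocked_otm M d) \<phi> a (T + p) = (sim_state d 1, snd (run M \<phi> a T) @ clock_tapes (X - u))"
    using clocked_sim_run[of T a X] assms(2) halted unfolding run_add p X_def T_def by auto
  moreover have "length (snd (run M \<phi> a T)) = tapes M"
    using valid_run[OF wf, of \<phi> a T] by (simp add: valid_config_def)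
  ultimately show ?thesis
    using otm_output_run_halted[of "clocked_otm M d" \<phi> a "T + p"] otm_output_run_halted[OF halted] three_tapes
    by (simp add: nth_append sim_state_def)
qed

end

lemma restricted_polytime_if_polytime_extension:
  assumes "polytime G" and "\<forall>\<phi>\<in>A. G \<phi> = F \<phi>"
  shows "restricted_polytime A F"
proof -
  obtain M P where "wf_otm M" "sop P" "computes_on UNIV M G"
    and "\<forall>\<phi>. \<forall>a. otm_time M \<phi> a \<le> P (size_fn \<phi>) (length a)"
    using assms(1) unfolding polytime_def restricted_polytime_def by blast
  moreover have "computes_on A M F"
    using \<open>computes_on UNIV M G\<close> assms(2) unfolding computes_on_def by auto
  ultimately show ?thesis
    unfolding restricted_polytime_def by blast
qed

lemma polytime_extension_if_restricted_polytime:
  assumes "restricted_polytime length_monotone F"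
  shows "\<exists>G. (\<forall>\<phi>\<in>length_monotone. G \<phi> = F \<phi>) \<and> polytime G"
proof -
  obtain M P where wf: "wf_otm M" and "sop P" and computes: "computes_on length_monotone M F"
    and time: "\<forall>\<phi>\<in>length_monotone. \<forall>a. otm_time M \<phi> a \<le> P (size_fn \<phi>) (length a)"
    using assms unfolding restricted_polytime_def by blast
  obtain d where d: "\<And>l n. mono l \<Longrightarrow> P l n \<le> clock_bound d l n"
    using sop_le_clock_bound[OF \<open>sop P\<close>] by blast
  have "otm_output (clocked_otm M d) \<phi> = F \<phi>" if "\<phi> \<in> length_monotone" for \<phi>
  proof
    fix a
    have "otm_time M \<phi> a \<le> clock_bound d (size_fn \<phi>) (length a)"
      using time that d[OF mono_size_fn] le_trans by blast
    then show "otm_output (clocked_otm M d) \<phi> a = F \<phi> a"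
      using clocked_otm_output[OF wf] computes that size_fn_eq_zero_query_size[OF that]
      unfolding computes_on_def by auto
  qed
  moreover have "polytime (otm_output (clocked_otm M d))"
    unfolding polytime_def restricted_polytime_def
  proof (intro exI conjI)
    show "sop (\<lambda>l n. (10 * d + 4) * clock_bound d l n + 2 * n + d + 9)"
      by (intro sop_add sop_mult sop_const sop_id sop_clock_bound)
  qed (use wf_clocked_otm[OF wf] clocked_otm_time[OF wf] in \<open>auto simp: computes_on_def\<close>)
  ultimately show ?thesis
    by blast
qed

theorem mainTheorem9:
  fixes F :: "strfun \<Rightarrow> strfun"
  shows "restricted_polytime length_monotone F \<longleftrightarrow>
    (\<exists>G. (\<forall>\<phi>\<in>length_monotone. G \<phi> = F \<phi>) \<and> polytime G)"
  using polytime_extension_if_restricted_polytime restricted_polytime_if_polytime_extension by blast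

end
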